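(* For every $t>0$ and every fixed 2-dimensional linear subspace $L$, $$\mathbb{E}_V\bigl[\overline{\mathrm{cr}}(G_L)\,\mathrm{stress}(G,G_L)\bigr]\ge\mathbb{E}_V\,\overline{\mathrm{cr}}(G_L)\;\mathbb{E}_V\,\mathrm{stress}(G,G_L),$$ i.e. $\mathrm{Cov}_V(\overline{\mathrm{cr}}(G_L),\mathrm{stress}(G,G_L))\ge0$.
   Context: Let $W\subset\mathbb{R}^d$ ($d\ge2$) be a compact convex set with $\mathrm{vol}_d(W)=1$; for $t>0$, $V$ is a Poisson point process of intensity $t$ on $W$ (draw $N\sim\mathrm{Poisson}(t)$, then $N$ i.i.d. uniform points in $W$); $\delta_t>0$. The graph $G$ has vertex set $V$ and a straight-segment edge between distinct $u,v\in V$ iff $\|u-v\|\le\delta_t$. For a 2-dimensional linear subspace $L$, $x|_L$ denotes orthogonal projection onto $L$, $[u,v]$ the segment from $u$ to $v$, and $V^k_{\neq}$ ordered $k$-tuples of pairwise distinct points of $V$. Define $$\overline{\mathrm{cr}}(G_L)=\tfrac18\sum_{(v_1,\dots,v_4)\in V^4_{\neq}}\mathbf 1\bigl([v_1,v_2]|_L\cap[v_3,v_4]|_L\neq\emptyset\bigr)\mathbf 1(\|v_1-v_2\|\le\delta_t)\mathbf 1(\|v_3-v_4\|\le\delta_t),$$ $$\mathrm{stress}(G,G_L)=\tfrac12\sum_{(v_1,v_2)\in V^2_{\neq}}w(v_1,v_2)\bigl(d_0(v_1,v_2)-d_L(v_1,v_2)\bigr)^2,$$ with $w:W\times W\to(0,\infty)$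 measurable, $d_0(v_1,v_2)=\|v_1-v_2\|$, $d_L(v_1,v_2)=\|v_1|_L-v_2|_L\|$. Assume $\mathrm{stress}(G,G_L)$ has finite second moment. *)

theory Defs
  imports "HOL-Probability.Probability"
begin

definition oproj :: "'a::euclidean_space set \<Rightarrow> 'a \<Rightarrow> 'a" where
  "oproj L x = (THE y. y \<in> L \<and> (\<forall>z\<in>L. (x - y) \<bullet> z = 0))"

text \<open>Sample space of the Poisson process: a Poisson(t) count N together with an i.i.d.
  sequence of uniform points in W; the process is V = the first N points.\<close>
definition pp_space :: "real \<Rightarrow> 'a::euclidean_space set \<Rightarrow> (nat \<times> (nat \<Rightarrow> 'a)) measure" where
  "pp_space t W = measure_pmf (poisson_pmf t) \<Otimes>\<^sub>M (\<Pi>\<^sub>M i\<in>(UNIV::nat set). uniform_measure lborel W)"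

definition pp_points :: "nat \<times> (nat \<Rightarrow> 'a) \<Rightarrow> 'a set" where
  "pp_points \<omega> = snd \<omega> ` {..<fst \<omega>}"

definition crbar :: "'a::euclidean_space set \<Rightarrow> real \<Rightarrow> 'a set \<Rightarrow> real" where
  "crbar L \<delta> V = (1/8) * (\<Sum>(v1,v2,v3,v4) \<in> {(v1,v2,v3,v4). v1 \<in> V \<and> v2 \<in> V \<and> v3 \<in> V \<and> v4 \<in> V
        \<and> distinct [v1,v2,v3,v4]}.
     (if (oproj L ` closed_segment v1 v2) \<inter> (oproj L ` closed_segment v3 v4) \<noteq> {}
         \<and> norm (v1 - v2) \<le> \<delta> \<and> norm (v3 - v4) \<le> \<delta> then 1 else 0))"

definition stress :: "('a::euclidean_space \<Rightarrow> 'a \<Rightarrow> real) \<Rightarrow> 'a set \<Rightarrow> 'a set \<Rightarrow> real" where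
  "stress w L V = (1/2) * (\<Sum>(v1,v2) \<in> {(v1,v2). v1 \<in> V \<and> v2 \<in> V \<and> v1 \<noteq> v2}.
     w v1 v2 * (norm (v1 - v2) - norm (oproj L v1 - oproj L v2))^2)"

end

theory Submission
  imports Defs
begin

text \<open>Both functionals are U-statistics of the Poisson process. Almost surely the N sampled
  points are distinct, so crbar is 1/8 of the sum of a kernel with values in [0, 1] over the
  4-tuples of distinct indices below N, and stress is 1/2 of the sum of a nonnegative kernel
  over the pairs. Given N = n, the expectation of the product of a sum over k-tuples and a sum
  over m-tuples is at least the contribution of the pairs of tuples without common index; by
  independence this is n (n - 1) \<dots> (n - k - m + 1) times the product of the two kernel means.
  The factorial moments of the Poisson distribution are t ^ j, so the expectation of the product
  is at least t ^ (k + m) times the product of the kernel means, which is the product of the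
  expectations.\<close>

subsection \<open>Orthogonal projection\<close>

lemma oproj_eqI:
  fixes L :: "'a::euclidean_space set"
  assumes L: "subspace L" and y: "y \<in> L" and orth: "\<And>z. z \<in> L \<Longrightarrow> (x - y) \<bullet> z = 0"
  shows "oproj L x = y"
  unfolding oproj_def
proof (rule the_equality)
  fix y' assume y': "y' \<in> L \<and> (\<forall>z\<in>L. (x - y') \<bullet> z = 0)"
  have "y' - y \<in> L" using L y y' by (simp add: subspace_diff)
  have "(y' - y) \<bullet> (y' - y) = (x - y) \<bullet> (y' - y) - (x - y') \<bullet> (y' - y)"
    by (simp add: algebra_simps inner_diff_left)
  also have "\<dots> = 0" using orth y' \<open>y' - y \<in> L\<close> by simp
  finally show "y' = y" by simp
qed (use y orth in auto)

lemma oproj_orthogonal_decomp: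
  fixes L :: "'a::euclidean_space set"
  assumes L: "subspace L"
  shows "oproj L x \<in> L" and "\<And>z. z \<in> L \<Longrightarrow> (x - oproj L x) \<bullet> z = 0"
proof -
  have span: "span L = L" using L by (simp add: span_eq_iff)
  obtain y z where "y \<in> span L" "\<And>u. u \<in> span L \<Longrightarrow> orthogonal z u" "x = y + z"
    by (rule orthogonal_subspace_decomp_exists[of L x]) blast
  then have y: "y \<in> L" and orth: "\<And>u. u \<in> L \<Longrightarrow> (x - y) \<bullet> u = 0"
    by (auto simp: span orthogonal_def)
  have "oproj L x = y" by (rule oproj_eqI[OF L y orth])
  with y orth show "oproj L x \<in> L" "\<And>z. z \<in> L \<Longrightarrow> (x - oproj L x) \<bullet> z = 0" by auto
qed

lemma linear_oproj:
  fixes L :: "'a::euclidean_space set"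
  assumes L: "subspace L"
  shows "linear (oproj L)"
proof
  fix x y
  show "oproj L (x + y) = oproj L x + oproj L y"
  proof (rule oproj_eqI[OF L])
    show "oproj L x + oproj L y \<in> L" by (simp add: L oproj_orthogonal_decomp(1) subspace_add)
    fix z assume "z \<in> L"
    have "x + y - (oproj L x + oproj L y) = (x - oproj L x) + (y - oproj L y)" by simp
    then show "(x + y - (oproj L x + oproj L y)) \<bullet> z = 0"
      using oproj_orthogonal_decomp(2)[OF L \<open>z \<in> L\<close>] by (simp only: inner_add_left)
  qed
next
  fix c x
  show "oproj L (c *\<^sub>R x) = c *\<^sub>R oproj L x"
    using oproj_orthogonal_decomp[OF L]
    by (intro oproj_eqI[OF L]) (auto simp: subspace_scale[OF L] simp flip: scaleR_diff_right)
qed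

lemma continuous_on_oproj[continuous_intros]:
  fixes L :: "'a::euclidean_space set"
  assumes "subspace L" and "continuous_on S f"
  shows "continuous_on S (\<lambda>x. oproj L (f x))"
proof -
  have "continuous_on UNIV (oproj L)"
    using linear_oproj[OF assms(1)] by (simp add: linear_continuous_on linear_linear)
  then show ?thesis using continuous_on_compose2[OF _ assms(2)] by blast
qed


subsection \<open>The crossing and stress kernels\<close>

definition crosses :: "'a::euclidean_space set \<Rightarrow> real \<Rightarrow> 'a \<Rightarrow> 'a \<Rightarrow> 'a \<Rightarrow> 'a \<Rightarrow> bool" where
  "crosses L \<delta> v1 v2 v3 v4 \<longleftrightarrow>
     (oproj L ` closed_segment v1 v2) \<inter> (oproj L ` closed_segment v3 v4) \<noteq> {}
     \<and> norm (v1 - v2) \<le> \<delta> \<and> norm (v3 - v4) \<le> \<delta>"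

lemma closed_segment_images_meet_iff:
  "f ` closed_segment a b \<inter> f ` closed_segment c d \<noteq> {} \<longleftrightarrow>
   (\<exists>u\<in>{0..1}. \<exists>v\<in>{0..1}. f ((1 - u) *\<^sub>R a + u *\<^sub>R b) = f ((1 - v) *\<^sub>R c + v *\<^sub>R d))"
  unfolding closed_segment_image_interval by blast

lemma closed_crosses:
  fixes L :: "'a::euclidean_space set"
  assumes L: "subspace L"
  shows "closed {(v1, v2, v3, v4). crosses L \<delta> v1 v2 v3 v4}"
proof -
  define meet :: "(real \<times> real) \<times> 'a \<times> 'a \<times> 'a \<times> 'a \<Rightarrow> bool" where
    "meet = (\<lambda>((u, v), v1, v2, v3, v4).
       oproj L ((1 - u) *\<^sub>R v1 + u *\<^sub>R v2) = oproj L ((1 - v) *\<^sub>R v3 + v *\<^sub>R v4))"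
  define short :: "'a \<times> 'a \<times> 'a \<times> 'a \<Rightarrow> bool" where
    "short = (\<lambda>(v1, v2, v3, v4). norm (v1 - v2) \<le> \<delta> \<and> norm (v3 - v4) \<le> \<delta>)"
  have "closed {p. meet p}"
    unfolding meet_def case_prod_unfold by (intro closed_Collect_eq continuous_intros L)
  then have "closed {q. \<exists>uv. uv \<in> {0..1} \<times> {0..1} \<and> (uv, q) \<in> {p. meet p}}"
    by (intro closed_compact_projection compact_Times compact_Icc)
  moreover have "closed {q. short q}"
    unfolding short_def case_prod_unfold by (intro closed_Collect_conj closed_Collect_le continuous_intros)
  moreover have "{(v1, v2, v3, v4). crosses L \<delta> v1 v2 v3 v4} =
      {q. \<exists>uv. uv \<in> {0..1} \<times> {0..1} \<and> (uv, q) \<in> {p. meet p}} \<inter> {q. short q}"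
    unfolding crosses_def closed_segment_images_meet_iff meet_def short_def by fastforce
  ultimately show ?thesis by (simp add: closed_Int)
qed

definition crossing_kernel :: "'a::euclidean_space set \<Rightarrow> real \<Rightarrow> (nat \<Rightarrow> 'a) \<Rightarrow> real" where
  "crossing_kernel L \<delta> Y = (if crosses L \<delta> (Y 0) (Y 1) (Y 2) (Y 3) then 1 else 0)"

text \<open>The weight w is only assumed positive on W; cutting the kernel off outside W keeps it
  nonnegative.\<close>
definition stress_kernel ::
    "('a::euclidean_space \<Rightarrow> 'a \<Rightarrow> real) \<Rightarrow> 'a set \<Rightarrow> 'a set \<Rightarrow> (nat \<Rightarrow> 'a) \<Rightarrow> real" where
  "stress_kernel w L W Y = (if Y 0 \<in> W \<and> Y 1 \<in> W
     then w (Y 0) (Y 1) * (norm (Y 0 - Y 1) - norm (oproj L (Y 0) - oproj L (Y 1)))\<^sup>2 else 0)"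

lemma crossing_kernel_measurable:
  fixes L :: "'a::euclidean_space set"
  assumes "subspace L" and "sets M = sets borel"
  shows "crossing_kernel L \<delta> \<in> borel_measurable (\<Pi>\<^sub>M i\<in>{..<4}. M)"
proof -
  have "{(v1, v2, v3, v4). crosses L \<delta> v1 v2 v3 v4} \<in> sets borel"
    by (intro borel_closed closed_crosses assms(1))
  then have "(\<lambda>Y. indicator {(v1, v2, v3, v4). crosses L \<delta> v1 v2 v3 v4} (Y 0, Y 1, Y 2, Y 3) :: real)
      \<in> borel_measurable (\<Pi>\<^sub>M i\<in>{..<4::nat}. (borel :: 'a measure))"
    by measurable
  moreover have "crossing_kernel L \<delta> =
      (\<lambda>Y. indicator {(v1, v2, v3, v4). crosses L \<delta> v1 v2 v3 v4} (Y 0, Y 1, Y 2, Y 3))"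
    by (simp add: fun_eq_iff crossing_kernel_def indicator_def)
  moreover have "sets (\<Pi>\<^sub>M i\<in>{..<4}. M) = sets (\<Pi>\<^sub>M i\<in>{..<4::nat}. (borel :: 'a measure))"
    by (intro sets_PiM_cong) (simp_all add: assms(2))
  then have "measurable (\<Pi>\<^sub>M i\<in>{..<4}. M) (borel :: real measure)
      = measurable (\<Pi>\<^sub>M i\<in>{..<4::nat}. (borel :: 'a measure)) borel"
    by (rule measurable_cong_sets) simp
  ultimately show ?thesis by simp
qed

lemma stress_kernel_measurable:
  fixes w :: "'a::euclidean_space \<Rightarrow> 'a \<Rightarrow> real"
  assumes "subspace L" and "closed W" and w: "(\<lambda>(x, y). w x y) \<in> borel_measurable borel"
    and "sets M = sets borel"
  shows "stress_kernel w L W \<in> borel_measurable (\<Pi>\<^sub>M i\<in>{..<2}. M)"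
proof -
  have [measurable]: "W \<in> sets borel" using assms(2) by (rule borel_closed)
  have [measurable]: "(\<lambda>(x, y). (norm (x - y) - norm (oproj L x - oproj L y))\<^sup>2) \<in> borel_measurable borel"
    unfolding case_prod_unfold
    by (intro borel_measurable_continuous_onI continuous_intros assms(1))
  have "(\<lambda>Y. indicator (W \<times> W) (Y 0, Y 1) * ((\<lambda>(x, y). w x y) (Y 0, Y 1) *
        (\<lambda>(x, y). (norm (x - y) - norm (oproj L x - oproj L y))\<^sup>2) (Y 0, Y 1)) :: real)
      \<in> borel_measurable (\<Pi>\<^sub>M i\<in>{..<2::nat}. (borel :: 'a measure))"
    using w by measurable
  moreover have "stress_kernel w L W = (\<lambda>Y. indicator (W \<times> W) (Y 0, Y 1) * ((\<lambda>(x, y). w x y) (Y 0, Y 1) *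
        (\<lambda>(x, y). (norm (x - y) - norm (oproj L x - oproj L y))\<^sup>2) (Y 0, Y 1)))"
    by (simp add: fun_eq_iff stress_kernel_def indicator_def)
  moreover have "sets (\<Pi>\<^sub>M i\<in>{..<2}. M) = sets (\<Pi>\<^sub>M i\<in>{..<2::nat}. (borel :: 'a measure))"
    by (intro sets_PiM_cong) (simp_all add: assms(4))
  then have "measurable (\<Pi>\<^sub>M i\<in>{..<2}. M) (borel :: real measure)
      = measurable (\<Pi>\<^sub>M i\<in>{..<2::nat}. (borel :: 'a measure)) borel"
    by (rule measurable_cong_sets) simp
  ultimately show ?thesis by simp
qed

definition distinct_lists :: "'b set \<Rightarrow> nat \<Rightarrow> 'b list set" where
  "distinct_lists A k = {xs. length xs = k \<and> distinct xs \<and> set xs \<subseteq> A}"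

lemma finite_distinct_lists: "finite A \<Longrightarrow> finite (distinct_lists A k)"
  unfolding distinct_lists_def by (rule finite_subset[OF _ finite_lists_length_eq[of A k]]) auto

lemma distinct_lists_eq_empty: "card A < k \<Longrightarrow> finite A \<Longrightarrow> distinct_lists A k = {}"
  by (auto simp: distinct_lists_def) (metis card_mono distinct_card leD)

lemma card_distinct_lists_lessThan:
  assumes "k \<le> n"
  shows "real (card (distinct_lists {..<n} k)) = fact n / fact (n - k)"
proof -
  have "(fact n :: nat) = fact (n - k) * \<Prod>{n - k + 1..n}"
    using fact_eq_fact_times[of "n - k" n] assms by simp
  then have "(fact n :: real) = fact (n - k) * real (\<Prod>{n - k + 1..n})"
    by (metis of_nat_fact of_nat_mult)
  then show ?thesis
    using card_lists_distinct_length_eq[of "{..<n}" k] assms by (simp add: distinct_lists_def)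
qed

lemma card_distinct_lists_le_power: "card (distinct_lists {..<n} k) \<le> n ^ k"
proof -
  have "card (distinct_lists {..<n} k) \<le> card {xs. set xs \<subseteq> {..<n} \<and> length xs = k}"
    by (intro card_mono finite_lists_length_eq) (auto simp: distinct_lists_def)
  then show ?thesis by (simp add: card_lists_length_eq)
qed

lemma bij_betw_map_distinct_lists:
  assumes "inj_on X A"
  shows "bij_betw (map X) (distinct_lists A k) (distinct_lists (X ` A) k)"
proof (rule bij_betw_imageI)
  show "inj_on (map X) (distinct_lists A k)"
    by (rule inj_on_mapI, rule inj_on_subset[OF assms]) (auto simp: distinct_lists_def)
  show "map X ` distinct_lists A k = distinct_lists (X ` A) k"
  proof (intro equalityI subsetI)
    fix vs assume vs: "vs \<in> distinct_lists (X ` A) k"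
    then have "map (inv_into A X) vs \<in> distinct_lists A k"
      by (auto simp: distinct_lists_def distinct_map inv_into_into intro: inj_on_inv_into)
    moreover have "map X (map (inv_into A X) vs) = vs"
      using vs unfolding map_map by (intro map_idI) (auto simp: distinct_lists_def f_inv_into_f)
    ultimately show "vs \<in> map X ` distinct_lists A k" by (metis image_eqI)
  qed (use assms in \<open>fastforce simp: distinct_lists_def distinct_map intro: inj_on_subset\<close>)
qed

lemma distinct_lists_4:
  "xs \<in> distinct_lists A 4 \<longleftrightarrow>
    (\<exists>a b c d. xs = [a, b, c, d] \<and> distinct [a, b, c, d] \<and> a \<in> A \<and> b \<in> A \<and> c \<in> A \<and> d \<in> A)"
  by (auto simp: distinct_lists_def length_Suc_conv numeral_eq_Suc)

lemma distinct_lists_2: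
  "xs \<in> distinct_lists A 2 \<longleftrightarrow> (\<exists>a b. xs = [a, b] \<and> a \<noteq> b \<and> a \<in> A \<and> b \<in> A)"
  by (auto simp: distinct_lists_def length_Suc_conv numeral_eq_Suc)

lemma bij_betw_distinct_lists_4:
  "bij_betw (\<lambda>vs. (vs ! 0, vs ! 1, vs ! 2, vs ! 3)) (distinct_lists V 4)
     {(v1, v2, v3, v4). v1 \<in> V \<and> v2 \<in> V \<and> v3 \<in> V \<and> v4 \<in> V \<and> distinct [v1, v2, v3, v4]}"
proof (rule bij_betw_imageI)
  show "inj_on (\<lambda>vs. (vs ! 0, vs ! 1, vs ! 2, vs ! 3)) (distinct_lists V 4)"
    by (auto simp: inj_on_def distinct_lists_4)
next
  show "(\<lambda>vs. (vs ! 0, vs ! 1, vs ! 2, vs ! 3)) ` distinct_lists V 4 =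
     {(v1, v2, v3, v4). v1 \<in> V \<and> v2 \<in> V \<and> v3 \<in> V \<and> v4 \<in> V \<and> distinct [v1, v2, v3, v4]}"
  proof (intro equalityI subsetI)
    fix q assume "q \<in> {(v1, v2, v3, v4). v1 \<in> V \<and> v2 \<in> V \<and> v3 \<in> V \<and> v4 \<in> V \<and> distinct [v1, v2, v3, v4]}"
    then obtain a b c d where "q = (a, b, c, d)" "distinct [a, b, c, d]" "a \<in> V" "b \<in> V" "c \<in> V" "d \<in> V"
      by auto
    then show "q \<in> (\<lambda>vs. (vs ! 0, vs ! 1, vs ! 2, vs ! 3)) ` distinct_lists V 4"
      by (intro image_eqI[of _ _ "[a, b, c, d]"]) (auto simp: distinct_lists_4)
  qed (auto simp: distinct_lists_4)
qed

lemma bij_betw_distinct_lists_2: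
  "bij_betw (\<lambda>vs. (vs ! 0, vs ! 1)) (distinct_lists V 2) {(v1, v2). v1 \<in> V \<and> v2 \<in> V \<and> v1 \<noteq> v2}"
proof (rule bij_betw_imageI)
  show "inj_on (\<lambda>vs. (vs ! 0, vs ! 1)) (distinct_lists V 2)"
    by (auto simp: inj_on_def distinct_lists_2)
next
  show "(\<lambda>vs. (vs ! 0, vs ! 1)) ` distinct_lists V 2 = {(v1, v2). v1 \<in> V \<and> v2 \<in> V \<and> v1 \<noteq> v2}"
  proof (intro equalityI subsetI)
    fix q assume "q \<in> {(v1, v2). v1 \<in> V \<and> v2 \<in> V \<and> v1 \<noteq> v2}"
    then obtain a b where "q = (a, b)" "a \<noteq> b" "a \<in> V" "b \<in> V" by auto
    then show "q \<in> (\<lambda>vs. (vs ! 0, vs ! 1)) ` distinct_lists V 2"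
      by (intro image_eqI[of _ _ "[a, b]"]) (auto simp: distinct_lists_2)
  qed (auto simp: distinct_lists_2)
qed

lemma card_disjoint_pairs_distinct_lists:
  "card {(xs, ys) \<in> distinct_lists A k \<times> distinct_lists A m. set xs \<inter> set ys = {}}
   = card (distinct_lists A (k + m))"
proof (rule bij_betw_same_card[symmetric], rule bij_betw_imageI)
  show "inj_on (\<lambda>zs. (take k zs, drop k zs)) (distinct_lists A (k + m))"
    by (rule inj_onI) (metis append_take_drop_id prod.inject)
  show "(\<lambda>zs. (take k zs, drop k zs)) ` distinct_lists A (k + m)
      = {(xs, ys) \<in> distinct_lists A k \<times> distinct_lists A m. set xs \<inter> set ys = {}}"
  proof (intro equalityI subsetI)
    fix p assume "p \<in> {(xs, ys) \<in> distinct_lists A k \<times> distinct_lists A m. set xs \<inter> set ys = {}}"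
    then obtain xs ys where "p = (xs, ys)" "xs \<in> distinct_lists A k" "ys \<in> distinct_lists A m"
      "set xs \<inter> set ys = {}" by blast
    then show "p \<in> (\<lambda>zs. (take k zs, drop k zs)) ` distinct_lists A (k + m)"
      by (intro image_eqI[of _ _ "xs @ ys"]) (auto simp: distinct_lists_def)
  qed (auto simp: distinct_lists_def dest: in_set_takeD in_set_dropD,
      metis append_take_drop_id distinct_append disjoint_iff)
qed


subsection \<open>U-statistics of a sequence\<close>

text \<open>A k-tuple of distinct sample points is handed to the kernel as a function on {..<k}, so
  that kernels are measurable functions on the finite product space.\<close>
definition ustat :: "nat \<Rightarrow> ((nat \<Rightarrow> 'a) \<Rightarrow> real) \<Rightarrow> nat \<Rightarrow> (nat \<Rightarrow> 'a) \<Rightarrow> real" where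
  "ustat k f n X = (\<Sum>xs\<in>distinct_lists {..<n} k. f (\<lambda>i\<in>{..<k}. X (xs ! i)))"

lemma ustat_nonneg: "(\<And>Y. 0 \<le> f Y) \<Longrightarrow> 0 \<le> ustat k f n X"
  unfolding ustat_def by (simp add: sum_nonneg)

lemma ustat_le_power:
  assumes "\<And>Y. f Y \<le> c" "0 \<le> c"
  shows "ustat k f n X \<le> c * real n ^ k"
proof -
  have "ustat k f n X \<le> c * real (card (distinct_lists {..<n} k))"
    unfolding ustat_def using sum_bounded_above[of _ "\<lambda>xs. f (\<lambda>i\<in>{..<k}. X (xs ! i))" c] assms(1)
    by (simp add: mult.commute)
  also have "\<dots> \<le> c * real n ^ k"
    using card_distinct_lists_le_power[of n k] assms(2)
    by (intro mult_left_mono) (simp_all flip: of_nat_power)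
  finally show ?thesis .
qed

lemma crbar_eq_ustat:
  assumes "inj_on X {..<n}"
  shows "crbar L \<delta> (X ` {..<n}) = ustat 4 (crossing_kernel L \<delta>) n X / 8"
proof -
  let ?V = "X ` {..<n}"
  let ?F = "\<lambda>(v1, v2, v3, v4). if crosses L \<delta> v1 v2 v3 v4 then 1 else 0 :: real"
  have "crbar L \<delta> ?V = (\<Sum>vs\<in>distinct_lists ?V 4. ?F (vs ! 0, vs ! 1, vs ! 2, vs ! 3)) / 8"
    unfolding crbar_def sum.reindex_bij_betw[OF bij_betw_distinct_lists_4] by (simp add: crosses_def)
  also have "\<dots> = (\<Sum>xs\<in>distinct_lists {..<n} 4. ?F (map X xs ! 0, map X xs ! 1, map X xs ! 2, map X xs ! 3)) / 8"
    by (simp only: sum.reindex_bij_betw[OF bij_betw_map_distinct_lists[OF assms], symmetric])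
  also have "\<dots> = ustat 4 (crossing_kernel L \<delta>) n X / 8"
    unfolding ustat_def
  proof (intro arg_cong[where f = "\<lambda>x. x / 8"] sum.cong refl)
    fix xs assume "xs \<in> distinct_lists {..<n} 4"
    then have "length xs = 4" by (simp add: distinct_lists_def)
    then show "?F (map X xs ! 0, map X xs ! 1, map X xs ! 2, map X xs ! 3)
        = crossing_kernel L \<delta> (\<lambda>i\<in>{..<4}. X (xs ! i))"
      by (simp add: crossing_kernel_def)
  qed
  finally show ?thesis .
qed

lemma stress_eq_ustat:
  assumes "inj_on X {..<n}" and "X ` {..<n} \<subseteq> W"
  shows "stress w L (X ` {..<n}) = ustat 2 (stress_kernel w L W) n X / 2"
proof -
  let ?V = "X ` {..<n}"
  let ?F = "\<lambda>(v1, v2). w v1 v2 * (norm (v1 - v2) - norm (oproj L v1 - oproj L v2))\<^sup>2"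
  have "stress w L ?V = (\<Sum>vs\<in>distinct_lists ?V 2. ?F (vs ! 0, vs ! 1)) / 2"
    unfolding stress_def sum.reindex_bij_betw[OF bij_betw_distinct_lists_2] by simp
  also have "\<dots> = (\<Sum>xs\<in>distinct_lists {..<n} 2. ?F (map X xs ! 0, map X xs ! 1)) / 2"
    by (simp only: sum.reindex_bij_betw[OF bij_betw_map_distinct_lists[OF assms(1)], symmetric])
  also have "\<dots> = ustat 2 (stress_kernel w L W) n X / 2"
    unfolding ustat_def
  proof (intro arg_cong[where f = "\<lambda>x. x / 2"] sum.cong refl)
    fix xs assume "xs \<in> distinct_lists {..<n} 2"
    then have "length xs = 2" "X (xs ! 0) \<in> W" "X (xs ! 1) \<in> W"
      using assms(2) by (auto simp: distinct_lists_2)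
    then show "?F (map X xs ! 0, map X xs ! 1) = stress_kernel w L W (\<lambda>i\<in>{..<2}. X (xs ! i))"
      by (simp add: stress_kernel_def)
  qed
  finally show ?thesis .
qed


subsection \<open>U-statistics of an i.i.d.\ sequence\<close>

locale iid_sequence = U: prob_space U for U :: "'a measure"
begin

abbreviation seq_space :: "(nat \<Rightarrow> 'a) measure" where
  "seq_space \<equiv> \<Pi>\<^sub>M i\<in>UNIV. U"

sublocale seq: prob_space seq_space
  by (intro prob_space_PiM U.prob_space_axioms)

lemma measurable_select: "(\<lambda>X. \<lambda>i\<in>{..<k}. X (xs ! i)) \<in> measurable seq_space (\<Pi>\<^sub>M i\<in>{..<k}. U)"
  by (intro measurable_restrict measurable_component_singleton) auto

lemma nn_integral_select:
  assumes "distinct xs" "length xs = k" and F: "F \<in> borel_measurable (\<Pi>\<^sub>M i\<in>{..<k}. U)"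
  shows "(\<integral>\<^sup>+X. F (\<lambda>i\<in>{..<k}. X (xs ! i)) \<partial>seq_space) = (\<integral>\<^sup>+Y. F Y \<partial>(\<Pi>\<^sub>M i\<in>{..<k}. U))"
proof -
  have "inj_on (\<lambda>i. xs ! i) {..<k}"
    using assms by (auto simp: inj_on_def nth_eq_iff_index_eq)
  then have distr: "distr seq_space (\<Pi>\<^sub>M i\<in>{..<k}. U) (\<lambda>X. \<lambda>i\<in>{..<k}. X (xs ! i)) = (\<Pi>\<^sub>M i\<in>{..<k}. U)"
    using distr_PiM_reindex[of UNIV "\<lambda>_. U" "\<lambda>i. xs ! i" "{..<k}"] U.prob_space_axioms by simp
  have "(\<integral>\<^sup>+Y. F Y \<partial>(\<Pi>\<^sub>M i\<in>{..<k}. U))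
      = (\<integral>\<^sup>+Y. F Y \<partial>distr seq_space (\<Pi>\<^sub>M i\<in>{..<k}. U) (\<lambda>X. \<lambda>i\<in>{..<k}. X (xs ! i)))"
    by (simp only: distr)
  also have "\<dots> = (\<integral>\<^sup>+X. F (\<lambda>i\<in>{..<k}. X (xs ! i)) \<partial>seq_space)"
    by (rule nn_integral_distr[OF measurable_select]) (simp only: distr F)
  finally show ?thesis ..
qed

lemma measurable_select_comp:
  "f \<in> measurable (\<Pi>\<^sub>M i\<in>{..<k}. U) N \<Longrightarrow> (\<lambda>X. f (\<lambda>i\<in>{..<k}. X (xs ! i))) \<in> measurable seq_space N"
  using measurable_comp[OF measurable_select] by (simp add: comp_def)

lemma indep_vars_coordinates: "seq.indep_vars (\<lambda>_. U) (\<lambda>i X. X i) UNIV"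
proof -
  have "(\<Pi>\<^sub>M i\<in>UNIV. distr seq_space U (\<lambda>X. X i)) = seq_space"
    by (intro PiM_cong refl distr_PiM_component U.prob_space_axioms) auto
  then show ?thesis
    by (subst seq.indep_vars_iff_distr_eq_PiM) (simp_all add: restrict_UNIV distr_id2)
qed

lemma nn_integral_mult_restrict:
  fixes f g :: "(nat \<Rightarrow> 'a) \<Rightarrow> ennreal"
  assumes "A \<inter> B = {}"
    and f: "f \<in> borel_measurable (\<Pi>\<^sub>M i\<in>A. U)" and g: "g \<in> borel_measurable (\<Pi>\<^sub>M i\<in>B. U)"
  shows "(\<integral>\<^sup>+X. f (restrict X A) * g (restrict X B) \<partial>seq_space)
       = (\<integral>\<^sup>+X. f (restrict X A) \<partial>seq_space) * (\<integral>\<^sup>+X. g (restrict X B) \<partial>seq_space)"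
proof -
  have "seq.indep_var (\<Pi>\<^sub>M i\<in>A. U) (\<lambda>X. restrict (\<lambda>i. X i) A) (\<Pi>\<^sub>M i\<in>B. U) (\<lambda>X. restrict (\<lambda>i. X i) B)"
    by (rule seq.indep_var_restrict[OF indep_vars_coordinates assms(1)]) auto
  then have "seq.indep_var borel (f \<circ> (\<lambda>X. restrict X A)) borel (g \<circ> (\<lambda>X. restrict X B))"
    using seq.indep_var_compose[OF _ f g] by simp
  then have "seq.indep_vars (\<lambda>_. borel) (case_bool (\<lambda>X. f (restrict X A)) (\<lambda>X. g (restrict X B))) UNIV"
    unfolding seq.indep_var_def by (simp add: comp_def case_bool_if if_distrib)
  then have "(\<integral>\<^sup>+X. (\<Prod>i\<in>UNIV. case_bool (\<lambda>X. f (restrict X A)) (\<lambda>X. g (restrict X B)) i X) \<partial>seq_space)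
    = (\<Prod>i\<in>UNIV. \<integral>\<^sup>+X. case_bool (\<lambda>X. f (restrict X A)) (\<lambda>X. g (restrict X B)) i X \<partial>seq_space)"
    by (intro seq.indep_vars_nn_integral) auto
  then show ?thesis by (simp add: UNIV_bool mult.commute)
qed

lemma nn_integral_select_mult:
  fixes F G :: "(nat \<Rightarrow> 'a) \<Rightarrow> ennreal"
  assumes xs: "distinct xs" "length xs = k" and ys: "distinct ys" "length ys = m"
    and disj: "set xs \<inter> set ys = {}"
    and F: "F \<in> borel_measurable (\<Pi>\<^sub>M i\<in>{..<k}. U)" and G: "G \<in> borel_measurable (\<Pi>\<^sub>M i\<in>{..<m}. U)"
  shows "(\<integral>\<^sup>+X. F (\<lambda>i\<in>{..<k}. X (xs ! i)) * G (\<lambda>i\<in>{..<m}. X (ys ! i)) \<partial>seq_space)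
       = (\<integral>\<^sup>+Y. F Y \<partial>(\<Pi>\<^sub>M i\<in>{..<k}. U)) * (\<integral>\<^sup>+Y. G Y \<partial>(\<Pi>\<^sub>M i\<in>{..<m}. U))"
proof -
  have select: "(\<lambda>Z. \<lambda>i\<in>{..<length zs}. Z (zs ! i)) \<in> measurable (\<Pi>\<^sub>M i\<in>set zs. U) (\<Pi>\<^sub>M i\<in>{..<length zs}. U)"
    for zs :: "nat list"
    by (intro measurable_restrict measurable_component_singleton) auto
  have restrict: "(\<lambda>i\<in>{..<l}. if zs ! i \<in> set zs then X (zs ! i) else undefined) = (\<lambda>i\<in>{..<l}. X (zs ! i))"
    if "length zs = l" for zs :: "nat list" and l and X :: "nat \<Rightarrow> 'a"
    using that by (intro restrict_ext) auto
  have "(\<integral>\<^sup>+X. F (\<lambda>i\<in>{..<k}. X (xs ! i)) * G (\<lambda>i\<in>{..<m}. X (ys ! i)) \<partial>seq_space)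
      = (\<integral>\<^sup>+X. F (\<lambda>i\<in>{..<k}. X (xs ! i)) \<partial>seq_space) * (\<integral>\<^sup>+X. G (\<lambda>i\<in>{..<m}. X (ys ! i)) \<partial>seq_space)"
    using nn_integral_mult_restrict[OF disj measurable_comp[OF select[of xs]] measurable_comp[OF select[of ys]],
        of F G] F G xs ys by (simp add: comp_def restrict)
  then show ?thesis
    using nn_integral_select[OF xs F] nn_integral_select[OF ys G] by simp
qed

lemma measurable_ustat:
  "f \<in> borel_measurable (\<Pi>\<^sub>M i\<in>{..<k}. U) \<Longrightarrow> ustat k f n \<in> borel_measurable seq_space"
  unfolding ustat_def by (intro borel_measurable_sum measurable_select_comp)

lemma nn_integral_ustat:
  assumes f: "f \<in> borel_measurable (\<Pi>\<^sub>M i\<in>{..<k}. U)" and f_nonneg: "\<And>Y. 0 \<le> f Y"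
  shows "(\<integral>\<^sup>+X. ustat k f n X \<partial>seq_space)
       = of_nat (card (distinct_lists {..<n} k)) * (\<integral>\<^sup>+Y. f Y \<partial>(\<Pi>\<^sub>M i\<in>{..<k}. U))"
proof -
  have "(\<integral>\<^sup>+X. ustat k f n X \<partial>seq_space)
      = (\<Sum>xs\<in>distinct_lists {..<n} k. \<integral>\<^sup>+X. f (\<lambda>i\<in>{..<k}. X (xs ! i)) \<partial>seq_space)"
    unfolding ustat_def using f f_nonneg
    by (simp add: nn_integral_sum measurable_select_comp flip: sum_ennreal)
  also have "\<dots> = (\<Sum>xs\<in>distinct_lists {..<n} k. \<integral>\<^sup>+Y. f Y \<partial>(\<Pi>\<^sub>M i\<in>{..<k}. U))"
    using f by (intro sum.cong refl nn_integral_select) (auto simp: distinct_lists_def)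
  finally show ?thesis by simp
qed

lemma nn_integral_ustat_mult_ge:
  assumes f: "f \<in> borel_measurable (\<Pi>\<^sub>M i\<in>{..<k}. U)" "\<And>Y. 0 \<le> f Y"
    and g: "g \<in> borel_measurable (\<Pi>\<^sub>M i\<in>{..<m}. U)" "\<And>Y. 0 \<le> g Y"
  shows "of_nat (card (distinct_lists {..<n} (k + m)))
           * ((\<integral>\<^sup>+Y. f Y \<partial>(\<Pi>\<^sub>M i\<in>{..<k}. U)) * (\<integral>\<^sup>+Y. g Y \<partial>(\<Pi>\<^sub>M i\<in>{..<m}. U)))
         \<le> (\<integral>\<^sup>+X. ustat k f n X * ustat m g n X \<partial>seq_space)"
proof -
  define D where "D = {(xs, ys) \<in> distinct_lists {..<n} k \<times> distinct_lists {..<n} m. set xs \<inter> set ys = {}}"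
  define T :: "nat list \<times> nat list \<Rightarrow> (nat \<Rightarrow> 'a) \<Rightarrow> real" where
    "T = (\<lambda>(xs, ys) X. f (\<lambda>i\<in>{..<k}. X (xs ! i)) * g (\<lambda>i\<in>{..<m}. X (ys ! i)))"
  have fin: "finite (distinct_lists {..<n} k \<times> distinct_lists {..<n} m)"
    by (simp add: finite_distinct_lists)
  have T_nonneg: "0 \<le> T p X" for p X using f g by (auto simp: T_def split: prod.split)
  have T_meas: "T p \<in> borel_measurable seq_space" for p
    using f g by (auto simp: T_def split: prod.split intro!: borel_measurable_times measurable_select_comp)
  have "(\<Sum>p\<in>D. \<integral>\<^sup>+X. T p X \<partial>seq_space)
      = (\<Sum>p\<in>D. (\<integral>\<^sup>+Y. f Y \<partial>(\<Pi>\<^sub>M i\<in>{..<k}. U)) * (\<integral>\<^sup>+Y. g Y \<partial>(\<Pi>\<^sub>M i\<in>{..<m}. U)))"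
  proof (rule sum.cong[OF refl])
    fix p assume "p \<in> D"
    then obtain xs ys where p: "p = (xs, ys)" and xs: "distinct xs" "length xs = k"
      and ys: "distinct ys" "length ys = m" and disj: "set xs \<inter> set ys = {}"
      by (auto simp: D_def distinct_lists_def)
    have "(\<integral>\<^sup>+X. T p X \<partial>seq_space)
        = (\<integral>\<^sup>+X. ennreal (f (\<lambda>i\<in>{..<k}. X (xs ! i))) * ennreal (g (\<lambda>i\<in>{..<m}. X (ys ! i))) \<partial>seq_space)"
      using f g by (simp add: p T_def ennreal_mult)
    also have "\<dots> = (\<integral>\<^sup>+Y. f Y \<partial>(\<Pi>\<^sub>M i\<in>{..<k}. U)) * (\<integral>\<^sup>+Y. g Y \<partial>(\<Pi>\<^sub>M i\<in>{..<m}. U))"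
      using f g by (intro nn_integral_select_mult[OF xs ys disj]) auto
    finally show "(\<integral>\<^sup>+X. T p X \<partial>seq_space)
        = (\<integral>\<^sup>+Y. f Y \<partial>(\<Pi>\<^sub>M i\<in>{..<k}. U)) * (\<integral>\<^sup>+Y. g Y \<partial>(\<Pi>\<^sub>M i\<in>{..<m}. U))" .
  qed
  then have "of_nat (card D) * ((\<integral>\<^sup>+Y. f Y \<partial>(\<Pi>\<^sub>M i\<in>{..<k}. U)) * (\<integral>\<^sup>+Y. g Y \<partial>(\<Pi>\<^sub>M i\<in>{..<m}. U)))
      = (\<Sum>p\<in>D. \<integral>\<^sup>+X. T p X \<partial>seq_space)"
    by simp
  also have "\<dots> = (\<integral>\<^sup>+X. (\<Sum>p\<in>D. T p X) \<partial>seq_space)"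
    using T_nonneg T_meas by (simp add: nn_integral_sum flip: sum_ennreal)
  also have "\<dots> \<le> (\<integral>\<^sup>+X. ustat k f n X * ustat m g n X \<partial>seq_space)"
  proof (intro nn_integral_mono ennreal_leI)
    fix X
    have "(\<Sum>p\<in>D. T p X) \<le> (\<Sum>p\<in>distinct_lists {..<n} k \<times> distinct_lists {..<n} m. T p X)"
      using fin T_nonneg by (intro sum_mono2) (auto simp: D_def)
    then show "(\<Sum>p\<in>D. T p X) \<le> ustat k f n X * ustat m g n X"
      by (simp add: ustat_def T_def sum_product sum.cartesian_product case_prod_unfold)
  qed
  finally show ?thesis
    using card_disjoint_pairs_distinct_lists[of "{..<n}" k m] by (simp add: D_def)
qed

end


lemma (in iid_sequence) distr_pair_coordinates:
  assumes "i \<noteq> j"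
  shows "distr seq_space (U \<Otimes>\<^sub>M U) (\<lambda>X. (X i, X j)) = U \<Otimes>\<^sub>M U"
proof -
  have "seq.indep_var (\<Pi>\<^sub>M l\<in>{i}. U) (\<lambda>X. restrict X {i}) (\<Pi>\<^sub>M l\<in>{j}. U) (\<lambda>X. restrict X {j})"
    using seq.indep_var_restrict[OF indep_vars_coordinates, of "{i}" "{j}"] assms by simp
  then have "seq.indep_var U ((\<lambda>Y. Y i) \<circ> (\<lambda>X. restrict X {i})) U ((\<lambda>Y. Y j) \<circ> (\<lambda>X. restrict X {j}))"
    by (rule seq.indep_var_compose) (auto intro: measurable_component_singleton)
  moreover have "distr seq_space U (\<lambda>X. X l) = U" for l
    by (intro distr_PiM_component U.prob_space_axioms) auto
  ultimately show ?thesis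
    by (simp add: comp_def seq.indep_var_distribution_eq)
qed

lemma AE_pair_measure_neq:
  fixes U :: "'a::{second_countable_topology, t2_space} measure"
  assumes "prob_space U" and sets_U: "sets U = sets borel" and no_atoms: "\<And>c. AE x in U. x \<noteq> c"
  shows "AE p in U \<Otimes>\<^sub>M U. fst p \<noteq> snd p"
proof -
  interpret UU: pair_prob_space U U using assms(1) by (simp add: pair_prob_space_def pair_sigma_finite_def
      prob_space_imp_sigma_finite)
  have "sets (U \<Otimes>\<^sub>M U) = sets (borel \<Otimes>\<^sub>M borel)"
    by (intro sets_pair_measure_cong sets_U)
  then have sets_UU: "sets (U \<Otimes>\<^sub>M U) = sets (borel :: ('a \<times> 'a) measure)"
    by (simp only: borel_prod)
  have "{p :: 'a \<times> 'a. fst p \<noteq> snd p} \<in> sets borel"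
    by (intro borel_open open_Collect_neq continuous_intros)
  then have "{p \<in> space (U \<Otimes>\<^sub>M U). fst p \<noteq> snd p} \<in> sets (U \<Otimes>\<^sub>M U)"
    using sets_eq_imp_space_eq[OF sets_UU] sets_UU by simp
  moreover have "AE x in U. AE y in U. fst (x, y) \<noteq> snd (x, y)"
  proof (rule AE_I2)
    fix x show "AE y in U. fst (x, y) \<noteq> snd (x, y)"
      using no_atoms[of x] by eventually_elim auto
  qed
  ultimately show ?thesis
    by (rule UU.AE_pair_measure)
qed

lemma AE_iid_sequence_inj:
  fixes U :: "'a::{second_countable_topology, t2_space} measure"
  assumes U: "prob_space U" and "sets U = sets borel" and "\<And>c. AE x in U. x \<noteq> c"
  shows "AE X in \<Pi>\<^sub>M (i :: nat)\<in>UNIV. U. inj X"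
proof -
  interpret iid_sequence U unfolding iid_sequence_def by (fact U)
  have "AE X in seq_space. X i \<noteq> X j" if "i \<noteq> j" for i j
  proof -
    have "AE p in distr seq_space (U \<Otimes>\<^sub>M U) (\<lambda>X. (X i, X j)). fst p \<noteq> snd p"
      unfolding distr_pair_coordinates[OF that] by (rule AE_pair_measure_neq[OF assms])
    moreover have "(\<lambda>X. (X i, X j)) \<in> measurable seq_space (U \<Otimes>\<^sub>M U)"
      by (intro measurable_Pair measurable_component_singleton) auto
    ultimately have "AE X in seq_space. fst (X i, X j) \<noteq> snd (X i, X j)"
      by (rule AE_distrD[rotated])
    then show ?thesis by simp
  qed
  then have "AE X in seq_space. \<forall>(i, j) \<in> UNIV. i \<noteq> j \<longrightarrow> X i \<noteq> X j"
    by (subst AE_ball_countable) auto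
  then show ?thesis
    by (rule eventually_mono) (auto simp: inj_def)
qed

subsection \<open>Poisson mixtures\<close>

lemma poisson_card_distinct_lists_sums:
  fixes t :: real
  assumes "0 < t"
  shows "(\<lambda>n. pmf (poisson_pmf t) n * real (card (distinct_lists {..<n} k))) sums (t ^ k)"
proof -
  let ?g = "\<lambda>n. pmf (poisson_pmf t) n * real (card (distinct_lists {..<n} k))"
  have "?g (i + k) = (t ^ k * exp (- t)) * (t ^ i /\<^sub>R fact i)" for i
    using assms by (simp add: pmf_poisson card_distinct_lists_lessThan power_add field_simps)
  moreover have "(\<lambda>i. (t ^ k * exp (- t)) * (t ^ i /\<^sub>R fact i)) sums ((t ^ k * exp (- t)) * exp t)"
    by (intro sums_mult exp_converges)
  ultimately have "(\<lambda>i. ?g (i + k)) sums (t ^ k)"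
    by (simp add: mult.assoc flip: exp_add)
  moreover have "(\<Sum>i<k. ?g i) = 0"
    by (intro sum.neutral) (auto simp: distinct_lists_eq_empty)
  ultimately show ?thesis
    using sums_iff_shift[of ?g k "t ^ k"] by simp
qed

text \<open>The cardinality of distinct_lists {..<n} k is the falling factorial n (n - 1) \<dots> (n - k + 1),
  so these are the factorial moments of the Poisson distribution.\<close>
lemma nn_integral_poisson_card_distinct_lists:
  fixes t :: real
  assumes "0 < t"
  shows "(\<integral>\<^sup>+n. of_nat (card (distinct_lists {..<n} k)) \<partial>measure_pmf (poisson_pmf t)) = ennreal (t ^ k)"
proof -
  have "(\<integral>\<^sup>+n. of_nat (card (distinct_lists {..<n} k)) \<partial>measure_pmf (poisson_pmf t))
      = (\<Sum>n. ennreal (pmf (poisson_pmf t) n * real (card (distinct_lists {..<n} k))))"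
    by (simp add: nn_integral_measure_pmf nn_integral_count_space_nat ennreal_mult
        ennreal_of_nat_eq_real_of_nat)
  also have "\<dots> = ennreal (t ^ k)"
    using poisson_card_distinct_lists_sums[OF assms, of k]
    by (subst suminf_ennreal2) (auto simp: sums_iff)
  finally show ?thesis .
qed

lemma power_le_fact_mult_exp:
  fixes x :: real
  assumes "0 \<le> x"
  shows "x ^ m \<le> fact m * exp x"
proof -
  have "x ^ m /\<^sub>R fact m = (\<Sum>i\<in>{m}. x ^ i /\<^sub>R fact i)" by simp
  also have "\<dots> \<le> (\<Sum>i. x ^ i /\<^sub>R fact i)"
    using assms by (intro sum_le_suminf summable_exp_generic) auto
  also have "\<dots> = exp x" using exp_converges[of x] by (simp add: sums_iff)
  finally show ?thesis by (simp add: field_simps)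
qed

text \<open>Bounding n ^ j by j! e ^ n reduces the moment to the exponential series at e t.\<close>
lemma nn_integral_poisson_power_finite:
  fixes t :: real
  assumes "0 < t"
  shows "(\<integral>\<^sup>+n. ennreal (real n ^ j) \<partial>measure_pmf (poisson_pmf t)) < \<infinity>"
proof -
  have "(\<integral>\<^sup>+n. ennreal (real n ^ j) \<partial>measure_pmf (poisson_pmf t))
      \<le> (\<integral>\<^sup>+n. ennreal (fact j * exp (- t) * ((exp 1 * t) ^ n /\<^sub>R fact n)) \<partial>count_space UNIV)"
    unfolding nn_integral_measure_pmf
  proof (intro nn_integral_mono)
    fix n :: nat
    have "exp (real n) = exp 1 ^ n"
      using exp_of_nat_mult[of n "1::real"] by simp
    then have "real n ^ j \<le> fact j * exp 1 ^ n"
      using power_le_fact_mult_exp[of "real n" j] by (simp only:)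
    then have "pmf (poisson_pmf t) n * real n ^ j \<le> pmf (poisson_pmf t) n * (fact j * exp 1 ^ n)"
      by (intro mult_left_mono) auto
    also have "\<dots> = fact j * exp (- t) * ((exp 1 * t) ^ n /\<^sub>R fact n)"
      using assms by (simp add: pmf_poisson power_mult_distrib divide_inverse ac_simps)
    finally show "ennreal (pmf (poisson_pmf t) n) * ennreal (real n ^ j)
        \<le> ennreal (fact j * exp (- t) * ((exp 1 * t) ^ n /\<^sub>R fact n))"
      by (simp add: ennreal_leI flip: ennreal_mult)
  qed
  also have "\<dots> = (\<Sum>n. ennreal (fact j * exp (- t) * ((exp 1 * t) ^ n /\<^sub>R fact n)))"
    by (rule nn_integral_count_space_nat)
  also have "\<dots> = ennreal (\<Sum>n. fact j * exp (- t) * ((exp 1 * t) ^ n /\<^sub>R fact n))"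
    using assms by (intro suminf_ennreal2 summable_mult summable_exp_generic) auto
  also have "\<dots> < \<infinity>" by simp
  finally show ?thesis .
qed


locale poisson_iid_sample = iid_sequence U for U :: "'a measure" +
  fixes t :: real
  assumes rate_pos: "0 < t"
begin

abbreviation sample_space :: "(nat \<times> (nat \<Rightarrow> 'a)) measure" where
  "sample_space \<equiv> measure_pmf (poisson_pmf t) \<Otimes>\<^sub>M seq_space"

sublocale sample: prob_space sample_space
  by (intro prob_space_pair prob_space_measure_pmf seq.prob_space_axioms)

lemma nn_integral_sample:
  "F \<in> borel_measurable sample_space \<Longrightarrow>
    (\<integral>\<^sup>+\<omega>. F \<omega> \<partial>sample_space) = (\<integral>\<^sup>+n. \<integral>\<^sup>+X. F (n, X) \<partial>seq_space \<partial>measure_pmf (poisson_pmf t))"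
  by (simp add: seq.nn_integral_fst)

lemma measurable_ustat_sample:
  assumes "f \<in> borel_measurable (\<Pi>\<^sub>M i\<in>{..<k}. U)"
  shows "(\<lambda>\<omega>. ustat k f (fst \<omega>) (snd \<omega>)) \<in> borel_measurable sample_space"
proof (rule measurable_compose_countable'[where g = fst])
  show "fst \<in> measurable sample_space (count_space UNIV)"
    using measurable_fst[of "measure_pmf (poisson_pmf t)" seq_space]
    by (simp add: measurable_cong_sets)
  show "(\<lambda>\<omega>. ustat k f n (snd \<omega>)) \<in> borel_measurable sample_space" for n
    using measurable_ustat[OF assms] by measurable
qed auto

lemma nn_integral_ustat_sample:
  assumes f: "f \<in> borel_measurable (\<Pi>\<^sub>M i\<in>{..<k}. U)" "\<And>Y. 0 \<le> f Y"
  shows "(\<integral>\<^sup>+\<omega>. ustat k f (fst \<omega>) (snd \<omega>) \<partial>sample_space) = ennreal (t ^ k) * (\<integral>\<^sup>+Y. f Y \<partial>(\<Pi>\<^sub>M i\<in>{..<k}. U))"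
proof -
  have "(\<integral>\<^sup>+\<omega>. ustat k f (fst \<omega>) (snd \<omega>) \<partial>sample_space)
      = (\<integral>\<^sup>+n. of_nat (card (distinct_lists {..<n} k)) * (\<integral>\<^sup>+Y. f Y \<partial>(\<Pi>\<^sub>M i\<in>{..<k}. U)) \<partial>measure_pmf (poisson_pmf t))"
    using measurable_ustat_sample[OF f(1)] f by (simp add: nn_integral_sample nn_integral_ustat)
  also have "\<dots> = ennreal (t ^ k) * (\<integral>\<^sup>+Y. f Y \<partial>(\<Pi>\<^sub>M i\<in>{..<k}. U))"
    using rate_pos by (simp add: nn_integral_multc nn_integral_poisson_card_distinct_lists)
  finally show ?thesis .
qed

lemma nn_integral_ustat_mult_sample_ge:
  assumes f: "f \<in> borel_measurable (\<Pi>\<^sub>M i\<in>{..<k}. U)" "\<And>Y. 0 \<le> f Y"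
    and g: "g \<in> borel_measurable (\<Pi>\<^sub>M i\<in>{..<m}. U)" "\<And>Y. 0 \<le> g Y"
  shows "ennreal (t ^ (k + m)) * ((\<integral>\<^sup>+Y. f Y \<partial>(\<Pi>\<^sub>M i\<in>{..<k}. U)) * (\<integral>\<^sup>+Y. g Y \<partial>(\<Pi>\<^sub>M i\<in>{..<m}. U)))
    \<le> (\<integral>\<^sup>+\<omega>. ustat k f (fst \<omega>) (snd \<omega>) * ustat m g (fst \<omega>) (snd \<omega>) \<partial>sample_space)"
proof -
  have "ennreal (t ^ (k + m)) * ((\<integral>\<^sup>+Y. f Y \<partial>(\<Pi>\<^sub>M i\<in>{..<k}. U)) * (\<integral>\<^sup>+Y. g Y \<partial>(\<Pi>\<^sub>M i\<in>{..<m}. U)))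
      = (\<integral>\<^sup>+n. of_nat (card (distinct_lists {..<n} (k + m)))
           * ((\<integral>\<^sup>+Y. f Y \<partial>(\<Pi>\<^sub>M i\<in>{..<k}. U)) * (\<integral>\<^sup>+Y. g Y \<partial>(\<Pi>\<^sub>M i\<in>{..<m}. U))) \<partial>measure_pmf (poisson_pmf t))"
    using rate_pos by (simp add: nn_integral_multc nn_integral_poisson_card_distinct_lists)
  also have "\<dots> \<le> (\<integral>\<^sup>+n. \<integral>\<^sup>+X. ustat k f n X * ustat m g n X \<partial>seq_space \<partial>measure_pmf (poisson_pmf t))"
    by (intro nn_integral_mono nn_integral_ustat_mult_ge f g)
  also have "\<dots> = (\<integral>\<^sup>+\<omega>. ustat k f (fst \<omega>) (snd \<omega>) * ustat m g (fst \<omega>) (snd \<omega>) \<partial>sample_space)"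
    using measurable_ustat_sample[OF f(1)] measurable_ustat_sample[OF g(1)]
    by (simp add: nn_integral_sample)
  finally show ?thesis .
qed

lemma integrable_sample_power: "integrable sample_space (\<lambda>\<omega>. real (fst \<omega>) ^ j)"
proof (subst integrable_iff_bounded, intro conjI)
  show "(\<lambda>\<omega>. real (fst \<omega>) ^ j) \<in> borel_measurable sample_space"
    by measurable
  have "(\<integral>\<^sup>+\<omega>. ennreal (norm (real (fst \<omega>) ^ j)) \<partial>sample_space)
      = (\<integral>\<^sup>+n. ennreal (real n ^ j) \<partial>measure_pmf (poisson_pmf t))"
    by (simp add: nn_integral_sample seq.emeasure_space_1)
  then show "(\<integral>\<^sup>+\<omega>. ennreal (norm (real (fst \<omega>) ^ j)) \<partial>sample_space) < \<infinity>"
    using nn_integral_poisson_power_finite[OF rate_pos] by simp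
qed

lemma integrable_ustat_sample_square:
  assumes f: "f \<in> borel_measurable (\<Pi>\<^sub>M i\<in>{..<k}. U)" "\<And>Y. 0 \<le> f Y" "\<And>Y. f Y \<le> c"
  shows "integrable sample_space (\<lambda>\<omega>. (ustat k f (fst \<omega>) (snd \<omega>))\<^sup>2)"
proof -
  have "integrable sample_space (\<lambda>\<omega>. c\<^sup>2 * (real (fst \<omega>) ^ k)\<^sup>2)"
    using integrable_sample_power[of "k * 2", unfolded power_mult] by simp
  moreover have "(\<lambda>\<omega>. (ustat k f (fst \<omega>) (snd \<omega>))\<^sup>2) \<in> borel_measurable sample_space"
    using measurable_ustat_sample[OF f(1)] by measurable
  moreover have "0 \<le> c" using f(2,3) order_trans by blast
  then have "(ustat k f n X)\<^sup>2 \<le> (c * real n ^ k)\<^sup>2" for n X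
    by (intro power_mono ustat_le_power ustat_nonneg f(2,3))
  then have "AE \<omega> in sample_space. norm ((ustat k f (fst \<omega>) (snd \<omega>))\<^sup>2) \<le> norm (c\<^sup>2 * (real (fst \<omega>) ^ k)\<^sup>2)"
    by (intro AE_I2) (simp add: power_mult_distrib)
  ultimately show ?thesis by (rule Bochner_Integration.integrable_bound)
qed

theorem ustat_covariance_nonneg:
  assumes f: "f \<in> borel_measurable (\<Pi>\<^sub>M i\<in>{..<k}. U)" "\<And>Y. 0 \<le> f Y" "\<And>Y. f Y \<le> c"
    and g: "g \<in> borel_measurable (\<Pi>\<^sub>M i\<in>{..<m}. U)" "\<And>Y. 0 \<le> g Y"
    and g_square: "integrable sample_space (\<lambda>\<omega>. (ustat m g (fst \<omega>) (snd \<omega>))\<^sup>2)"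
  shows "(\<integral>\<omega>. ustat k f (fst \<omega>) (snd \<omega>) \<partial>sample_space) * (\<integral>\<omega>. ustat m g (fst \<omega>) (snd \<omega>) \<partial>sample_space)
    \<le> (\<integral>\<omega>. ustat k f (fst \<omega>) (snd \<omega>) * ustat m g (fst \<omega>) (snd \<omega>) \<partial>sample_space)"
proof -
  define A where "A \<omega> = ustat k f (fst \<omega>) (snd \<omega>)" for \<omega>
  define B where "B \<omega> = ustat m g (fst \<omega>) (snd \<omega>)" for \<omega>
  have A_meas: "A \<in> borel_measurable sample_space" and B_meas: "B \<in> borel_measurable sample_space"
    unfolding A_def B_def using measurable_ustat_sample f(1) g(1) by auto
  have A_nonneg: "0 \<le> A \<omega>" and B_nonneg: "0 \<le> B \<omega>" for \<omega>
    unfolding A_def B_def using ustat_nonneg f(2) g(2) by auto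
  have A_square: "integrable sample_space (\<lambda>\<omega>. (A \<omega>)\<^sup>2)"
    unfolding A_def by (rule integrable_ustat_sample_square[OF f])
  have B_square: "integrable sample_space (\<lambda>\<omega>. (B \<omega>)\<^sup>2)"
    unfolding B_def by (fact g_square)
  have A_int: "integrable sample_space A" and B_int: "integrable sample_space B"
    using sample.square_integrable_imp_integrable A_meas A_square B_meas B_square by auto
  have "A \<omega> * B \<omega> \<le> (A \<omega>)\<^sup>2 + (B \<omega>)\<^sup>2" for \<omega>
    using sum_squares_bound[of "A \<omega>" "B \<omega>"] mult_nonneg_nonneg[OF A_nonneg B_nonneg, of \<omega> \<omega>]
    by (simp add: power2_eq_square)
  then have "AE \<omega> in sample_space. norm (A \<omega> * B \<omega>) \<le> norm ((A \<omega>)\<^sup>2 + (B \<omega>)\<^sup>2)"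
    using A_nonneg B_nonneg by (intro AE_I2) simp
  then have AB_int: "integrable sample_space (\<lambda>\<omega>. A \<omega> * B \<omega>)"
    by (rule Bochner_Integration.integrable_bound[OF Bochner_Integration.integrable_add[OF A_square B_square]
          borel_measurable_times[OF A_meas B_meas]])
  have "ennreal ((\<integral>\<omega>. A \<omega> \<partial>sample_space) * (\<integral>\<omega>. B \<omega> \<partial>sample_space))
      = (\<integral>\<^sup>+\<omega>. A \<omega> \<partial>sample_space) * (\<integral>\<^sup>+\<omega>. B \<omega> \<partial>sample_space)"
    using A_int B_int A_nonneg B_nonneg
    by (simp add: ennreal_mult integral_nonneg_AE nn_integral_eq_integral)
  also have "\<dots> = ennreal (t ^ (k + m))
      * ((\<integral>\<^sup>+Y. f Y \<partial>(\<Pi>\<^sub>M i\<in>{..<k}. U)) * (\<integral>\<^sup>+Y. g Y \<partial>(\<Pi>\<^sub>M i\<in>{..<m}. U)))"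
    using rate_pos f g
    by (simp add: A_def B_def nn_integral_ustat_sample power_add ennreal_mult mult_ac)
  also have "\<dots> \<le> (\<integral>\<^sup>+\<omega>. A \<omega> * B \<omega> \<partial>sample_space)"
    unfolding A_def B_def by (rule nn_integral_ustat_mult_sample_ge[OF f(1,2) g])
  also have "\<dots> = ennreal (\<integral>\<omega>. A \<omega> * B \<omega> \<partial>sample_space)"
    using AB_int A_nonneg B_nonneg by (simp add: nn_integral_eq_integral)
  finally show ?thesis
    using A_nonneg B_nonneg by (simp add: A_def B_def ennreal_le_iff integral_nonneg_AE)
qed

end


subsection \<open>The Poisson point process\<close>

lemma AE_pair_measure_snd:
  assumes "pair_sigma_finite M1 M2" and "AE y in M2. P y"
  shows "AE x in M1 \<Otimes>\<^sub>M M2. P (snd x)"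
proof -
  interpret pair_sigma_finite M1 M2 by fact
  from assms(2) obtain N where N: "{y \<in> space M2. \<not> P y} \<subseteq> N" "emeasure M2 N = 0" "N \<in> sets M2"
    by (rule AE_E)
  have "space M1 \<times> N \<in> null_sets (M1 \<Otimes>\<^sub>M M2)"
    using N by (simp add: M2.emeasure_pair_measure_Times null_sets_def)
  moreover have "{x \<in> space (M1 \<Otimes>\<^sub>M M2). \<not> P (snd x)} \<subseteq> space M1 \<times> N"
    using N by (auto simp: space_pair_measure)
  ultimately show ?thesis by (rule AE_I')
qed

text \<open>The identities hold only almost surely: coinciding sample points would merge into a single
  point of pp_points, and a point outside W would make the stress kernel vanish.\<close>
lemma AE_pp_points_ustat:
  fixes W :: "'a::euclidean_space set" and t :: real
  assumes W: "W \<in> sets lborel" "emeasure lborel W = 1"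
  shows "AE \<omega> in pp_space t W.
    crbar L \<delta> (pp_points \<omega>) = 1 / 8 * ustat 4 (crossing_kernel L \<delta>) (fst \<omega>) (snd \<omega>) \<and>
    stress w L (pp_points \<omega>) = 1 / 2 * ustat 2 (stress_kernel w L W) (fst \<omega>) (snd \<omega>)"
proof -
  let ?U = "uniform_measure lborel W"
  have U: "prob_space ?U" using W by (intro prob_space_uniform_measure) auto
  interpret iid_sequence ?U unfolding iid_sequence_def by (fact U)
  have "AE x in ?U. x \<noteq> c" for c
    using W AE_lborel_singleton[of c] by (subst AE_uniform_measure) (auto elim: AE_mp)
  then have "AE X in seq_space. inj X"
    by (intro AE_iid_sequence_inj U) simp_all
  moreover have "AE X in seq_space. \<forall>i. X i \<in> W"
    unfolding AE_all_countable using W U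
    by (intro allI AE_PiM_component) (auto simp: AE_uniform_measure)
  ultimately have "AE X in seq_space. inj X \<and> range X \<subseteq> W"
    by eventually_elim auto
  then have "AE \<omega> in pp_space t W. inj (snd \<omega>) \<and> range (snd \<omega>) \<subseteq> W"
    unfolding pp_space_def
    by (intro AE_pair_measure_snd pair_sigma_finite.intro prob_space_imp_sigma_finite
        prob_space_measure_pmf seq.prob_space_axioms)
  then show ?thesis
  proof eventually_elim
    case (elim \<omega>)
    then have "inj_on (snd \<omega>) {..<fst \<omega>}" "snd \<omega> ` {..<fst \<omega>} \<subseteq> W"
      by (auto intro: inj_on_subset)
    then show ?case by (simp add: pp_points_def crbar_eq_ustat stress_eq_ustat)
  qed
qed

text \<open>No measurability of f is assumed: if f is not measurable, its integral is 0 by convention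
  and the inequality reduces to the nonnegativity of f times g.\<close>
lemma integral_mult_ge_if_AE_rescaled:
  fixes f g F G :: "'a \<Rightarrow> real"
  assumes f: "AE x in M. f x = a * F x" and g: "AE x in M. g x = b * G x" and "0 \<le> a" "0 \<le> b"
    and F: "F \<in> borel_measurable M" "\<And>x. 0 \<le> F x" and G: "G \<in> borel_measurable M" "\<And>x. 0 \<le> G x"
    and g_meas: "g \<in> borel_measurable M"
    and FG: "(\<integral>x. F x \<partial>M) * (\<integral>x. G x \<partial>M) \<le> (\<integral>x. F x * G x \<partial>M)"
  shows "(\<integral>x. f x \<partial>M) * (\<integral>x. g x \<partial>M) \<le> (\<integral>x. f x * g x \<partial>M)"
proof (cases "f \<in> borel_measurable M")
  case True
  have "(\<integral>x. f x \<partial>M) = a * (\<integral>x. F x \<partial>M)"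
    using integral_cong_AE[OF True _ f] F by simp
  moreover have "(\<integral>x. g x \<partial>M) = b * (\<integral>x. G x \<partial>M)"
    using integral_cong_AE[OF g_meas _ g] G by simp
  moreover have "(\<integral>x. f x * g x \<partial>M) = (a * b) * (\<integral>x. F x * G x \<partial>M)"
  proof -
    have "AE x in M. f x * g x = (a * b) * (F x * G x)"
      using f g by eventually_elim simp
    moreover have "(\<lambda>x. a * b * (F x * G x)) \<in> borel_measurable M"
      by (intro borel_measurable_times borel_measurable_const F(1) G(1))
    ultimately show ?thesis
      using integral_cong_AE[OF borel_measurable_times[OF True g_meas]] by simp
  qed
  ultimately show ?thesis
    using FG mult_left_mono[OF FG, of "a * b"] \<open>0 \<le> a\<close> \<open>0 \<le> b\<close> by (simp add: mult_ac)
next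
  case False
  then have "(\<integral>x. f x \<partial>M) = 0"
    by (auto intro: not_integrable_integral_eq dest: borel_measurable_integrable)
  moreover have "AE x in M. 0 \<le> f x * g x"
    using f g by eventually_elim (simp add: F(2) G(2) \<open>0 \<le> a\<close> \<open>0 \<le> b\<close>)
  then have "0 \<le> (\<integral>x. f x * g x \<partial>M)"
    by (rule integral_nonneg_AE)
  ultimately show ?thesis by simp
qed

lemma integrable_square_if_AE_rescaled:
  fixes f G :: "'a \<Rightarrow> real"
  assumes "AE x in M. f x = b * G x" and "b \<noteq> 0" and "integrable M (\<lambda>x. (f x)\<^sup>2)"
    and "G \<in> borel_measurable M"
  shows "integrable M (\<lambda>x. (G x)\<^sup>2)"
proof -
  have "AE x in M. (G x)\<^sup>2 = (f x)\<^sup>2 / b\<^sup>2"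
    using assms(1) by eventually_elim (simp add: assms(2) power_mult_distrib)
  moreover have "integrable M (\<lambda>x. (f x)\<^sup>2 / b\<^sup>2)"
    using assms(3) by (rule integrable_divide_zero)
  ultimately show ?thesis
    using integrable_cong_AE[OF borel_measurable_power[OF assms(4)] borel_measurable_integrable]
    by blast
qed

theorem theorem5:
  fixes W L :: "'a::euclidean_space set" and t \<delta> :: real and w :: "'a \<Rightarrow> 'a \<Rightarrow> real"
  assumes "DIM('a) \<ge> 2"
    and "compact W" and "convex W" and "emeasure lborel W = 1"
    and "t > 0" and "\<delta> > 0"
    and "(\<lambda>(x, y). w x y) \<in> borel_measurable borel"
    and "\<forall>x\<in>W. \<forall>y\<in>W. w x y > 0"
    and "subspace L" and "dim L = 2"
    and "(\<lambda>\<omega>. stress w L (pp_points \<omega>)) \<in> borel_measurable (pp_space t W)"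
    and "integrable (pp_space t W) (\<lambda>\<omega>. (stress w L (pp_points \<omega>))^2)"
  shows "(\<integral>\<omega>. crbar L \<delta> (pp_points \<omega>) * stress w L (pp_points \<omega>) \<partial>pp_space t W)
         \<ge> (\<integral>\<omega>. crbar L \<delta> (pp_points \<omega>) \<partial>pp_space t W) * (\<integral>\<omega>. stress w L (pp_points \<omega>) \<partial>pp_space t W)"
proof -
  define U where "U = uniform_measure lborel W"
  have W: "W \<in> sets lborel" using assms(2) by (simp add: borel_compact)
  have "prob_space U" unfolding U_def using W assms(4) by (intro prob_space_uniform_measure) auto
  then interpret poisson_iid_sample U t
    using assms(5) by (simp add: poisson_iid_sample_def poisson_iid_sample_axioms_def iid_sequence_def)
  have pp_space: "pp_space t W = sample_space" by (simp add: pp_space_def U_def)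
  have sets_U: "sets U = sets borel" by (simp add: U_def)
  have crossing: "crossing_kernel L \<delta> \<in> borel_measurable (\<Pi>\<^sub>M i\<in>{..<4}. U)"
    by (intro crossing_kernel_measurable assms(9) sets_U)
  have crossing_bounds: "0 \<le> crossing_kernel L \<delta> Y" "crossing_kernel L \<delta> Y \<le> 1" for Y
    by (simp_all add: crossing_kernel_def)
  have stress: "stress_kernel w L W \<in> borel_measurable (\<Pi>\<^sub>M i\<in>{..<2}. U)"
    by (rule stress_kernel_measurable[OF assms(9) compact_imp_closed[OF assms(2)] assms(7) sets_U])
  have stress_nonneg: "0 \<le> stress_kernel w L W Y" for Y
    using assms(8) by (auto simp: stress_kernel_def less_imp_le)
  from AE_pp_points_ustat[OF W assms(4), where t = t and L = L and \<delta> = \<delta> and w = w]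
  have AE_crbar: "AE \<omega> in sample_space.
      crbar L \<delta> (pp_points \<omega>) = 1 / 8 * ustat 4 (crossing_kernel L \<delta>) (fst \<omega>) (snd \<omega>)"
    and AE_stress: "AE \<omega> in sample_space.
      stress w L (pp_points \<omega>) = 1 / 2 * ustat 2 (stress_kernel w L W) (fst \<omega>) (snd \<omega>)"
    unfolding pp_space AE_conj_iff by blast+
  have "integrable sample_space (\<lambda>\<omega>. (ustat 2 (stress_kernel w L W) (fst \<omega>) (snd \<omega>))\<^sup>2)"
    by (rule integrable_square_if_AE_rescaled[OF AE_stress _ assms(12)[unfolded pp_space]
          measurable_ustat_sample[OF stress]]) simp
  then show ?thesis
    unfolding pp_space
    by (intro integral_mult_ge_if_AE_rescaled[OF AE_crbar AE_stress _ _
          measurable_ustat_sample[OF crossing] ustat_nonneg[OF crossing_bounds(1)]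
          measurable_ustat_sample[OF stress] ustat_nonneg[OF stress_nonneg] assms(11)[unfolded pp_space]]
        ustat_covariance_nonneg[OF crossing crossing_bounds stress stress_nonneg]) simp_all
qed

end
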